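(* Let $s$ be a deterministic infinite sequence over $\mathcal A$ such that the limit \[ h(s):=\lim_{n\to\infty}\frac1n\ln\Big(\frac{1}{p(s^{(n)})}\Big) \] exists and satisfies $h(s)>0$. Then $\dfrac{X_n(s)}{\ln n}\to\dfrac{1}{h(s)}$ almost surely as $n\to\infty$.
   Context: Alphabet $\mathcal A=\{A,C,G,T\}$. $U=(U_n)_{n\ge1}$ is a stationary Markov chain of order 1 on $\mathcal A$ with transition matrix $Q$ (irreducible and aperiodic) started from its invariant measure $p$. For an infinite sequence $s$, $s^{(n)}=s_1\dots s_n$ and $p(s^{(n)}):=\mathbb P(U_1=s_n,\dots,U_n=s_1)$. CGR-tree: nodes of the complete quaternary tree are identified with finite words over $\mathcal A$ (root = empty word, children of $w$ are $wa$). With $W(n)=U_n\dots U_1$, set $\mathcal T_0=\{\text{root}\}$ and for $n\ge1$ let $\mathcal T_n=\mathcal T_{n-1}\cup\{w_n\}$ where $w_n$ is the shortest prefix (of length $\ge1$) of $W(n)$ that is not a node of $\mathcal T_{n-1}$. For an infinite sequence $s$, $X_n(s)=\max\{k\ge0: s^{(k)}\in\mathcal T_n\}$. *)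

theory Defs
  imports "HOL-Probability.Probability"
begin

datatype nucl = A | C | G | T

lemma UNIV_nucl: "(UNIV :: nucl set) = {A, C, G, T}"
  by (auto intro: nucl.exhaust)

instance nucl :: finite
  by standard (simp add: UNIV_nucl)

fun mpow :: "(nucl \<Rightarrow> nucl \<Rightarrow> real) \<Rightarrow> nat \<Rightarrow> nucl \<Rightarrow> nucl \<Rightarrow> real" where
  "mpow Q 0 a b = (if a = b then 1 else 0)"
| "mpow Q (Suc n) a b = (\<Sum>c\<in>UNIV. mpow Q n a c * Q c b)"

definition stochastic_matrix :: "(nucl \<Rightarrow> nucl \<Rightarrow> real) \<Rightarrow> bool" where
  "stochastic_matrix Q \<longleftrightarrow> (\<forall>a b. 0 \<le> Q a b) \<and> (\<forall>a. (\<Sum>b\<in>UNIV. Q a b) = 1)"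

definition irreducible_matrix :: "(nucl \<Rightarrow> nucl \<Rightarrow> real) \<Rightarrow> bool" where
  "irreducible_matrix Q \<longleftrightarrow> (\<forall>a b. \<exists>n>0. mpow Q n a b > 0)"

definition aperiodic_matrix :: "(nucl \<Rightarrow> nucl \<Rightarrow> real) \<Rightarrow> bool" where
  "aperiodic_matrix Q \<longleftrightarrow> (\<forall>a. Gcd {n::nat. n > 0 \<and> mpow Q n a a > 0} = 1)"

definition invariant_measure :: "(nucl \<Rightarrow> nucl \<Rightarrow> real) \<Rightarrow> (nucl \<Rightarrow> real) \<Rightarrow> bool" where
  "invariant_measure Q p \<longleftrightarrow> (\<forall>a. 0 \<le> p a) \<and> (\<Sum>a\<in>UNIV. p a) = 1 \<and>
     (\<forall>b. (\<Sum>a\<in>UNIV. p a * Q a b) = p b)"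

text \<open>U (indexed from 1; U 0 unused) is a Markov chain of order 1 with transition matrix Q
  started from p: all finite-dimensional laws of (U 1, ..., U n) are those of the chain.\<close>
definition markov_chain_from ::
    "'w measure \<Rightarrow> (nat \<Rightarrow> 'w \<Rightarrow> nucl) \<Rightarrow> (nucl \<Rightarrow> real) \<Rightarrow> (nucl \<Rightarrow> nucl \<Rightarrow> real) \<Rightarrow> bool" where
  "markov_chain_from M U p Q \<longleftrightarrow>
     (\<forall>i. U i \<in> measurable M (count_space UNIV)) \<and>
     (\<forall>n\<ge>1. \<forall>a :: nat \<Rightarrow> nucl.
        measure M {\<omega> \<in> space M. \<forall>i\<in>{1..n}. U i \<omega> = a i}
          = p (a 1) * (\<Prod>i\<in>{1..<n}. Q (a i) (a (Suc i))))"

definition pword :: "'w measure \<Rightarrow> (nat \<Rightarrow> 'w \<Rightarrow> nucl) \<Rightarrow> (nat \<Rightarrow> nucl) \<Rightarrow> nat \<Rightarrow> real" where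
  "pword M U s n = measure M {\<omega> \<in> space M. \<forall>i\<in>{1..n}. U i \<omega> = s (n + 1 - i)}"

text \<open>W(n) = U_n ... U_1 as a word (list), for a realisation u (indexed from 1).\<close>
definition Wword :: "(nat \<Rightarrow> nucl) \<Rightarrow> nat \<Rightarrow> nucl list" where
  "Wword u n = map (\<lambda>i. u (n - i)) [0..<n]"

text \<open>CGR-tree: set of nodes (finite words; root = []).\<close>
fun cgr_tree :: "(nat \<Rightarrow> nucl) \<Rightarrow> nat \<Rightarrow> nucl list set" where
  "cgr_tree u 0 = {[]}"
| "cgr_tree u (Suc n) =
     (let W = Wword u (Suc n);
          k = (LEAST k. 1 \<le> k \<and> take k W \<notin> cgr_tree u n)
      in insert (take k W) (cgr_tree u n))"

text \<open>s^(k) = s_1 ... s_k for a sequence s indexed from 1.\<close>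
definition sprefix :: "(nat \<Rightarrow> nucl) \<Rightarrow> nat \<Rightarrow> nucl list" where
  "sprefix s k = map (\<lambda>i. s (Suc i)) [0..<k]"

definition Xn :: "(nat \<Rightarrow> nucl) \<Rightarrow> nat \<Rightarrow> (nat \<Rightarrow> nucl) \<Rightarrow> nat" where
  "Xn u n s = Max {k. sprefix s k \<in> cgr_tree u n}"

end

theory Submission
  imports Defs "HOL-Library.Sublist" "HOL-Real_Asymp.Real_Asymp"
begin

(*
  X_n(s) is the depth of the branch of s in the CGR-tree, and the node s^(k) can only be
  present at time n if the reversed word s^(k) has been read by the chain as a window
  U_{a+1} ... U_{a+k} with a < n.  Since p(s^(k)) = exp(-k h + o(k)), the probability of this
  is at most n exp(-k h + o(k)); for k = (1 + e) ln n / h, checked along n = 2^j, these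
  probabilities are summable and Borel-Cantelli gives X_n <= (1 + e) ln n / h eventually.

  Conversely, s^(j) is inserted as soon as it is read after s^(j-1) is already a node.  For
  K = (1 - e) ln n / h, cut the times up to n into K segments, the j-th one into m blocks
  of length D + K, and look for s^(j) in the blocks of segment j.  Irreducibility gives
  delta > 0 and D such that from any state every letter is reached within D steps with
  probability at least delta, so by the Markov property the probability that all m blocks
  miss s^(j) is at most (1 - delta p(s^(K)))^m <= exp(-delta m n^(-1+e/2)).  This is
  summable in n, so eventually every prefix is found in its segment and X_n >= K.
*)

lemma real_div_ge: "real a / real b - 1 \<le> real (a div b)"
  using floor_divide_of_nat_eq[of a b, where 'a = real]
      real_of_int_floor_gt_diff_one[of "real a / real b"]
  by simp

lemma real_div_div_ge:
  assumes "1 \<le> K" and "real K \<le> k"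
  shows "((real n - 1) / k - 1) / (real D + k) - 1 \<le> real ((n - 1) div K div (D + K))"
proof -
  have "(real n - 1) / k - 1 \<le> real (n - 1) / real K - 1"
    using assms by (cases n) (auto intro: divide_left_mono)
  also have "\<dots> \<le> real ((n - 1) div K)"
    by (rule real_div_ge)
  finally have "((real n - 1) / k - 1) / (real D + k) \<le> real ((n - 1) div K) / (real D + k)"
    using assms by (intro divide_right_mono) auto
  also have "\<dots> \<le> real ((n - 1) div K) / real (D + K)"
    using assms by (intro divide_left_mono) auto
  also have "\<dots> - 1 \<le> real ((n - 1) div K div (D + K))"
    by (rule real_div_ge)
  finally show ?thesis by simp
qed

lemma two_power_mult_exp_le:
  fixes a c k :: real
  assumes "0 \<le> a" and "c * (real j + 1) \<le> k"
  shows "2 ^ (j + 1) * exp (- (k * a)) \<le> exp (ln 2 - c * a) ^ (j + 1)"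
proof -
  have "real (j + 1) * (c * a) \<le> k * a"
    using mult_right_mono[OF assms(2,1)] by (simp add: algebra_simps)
  moreover have two: "(2::real) ^ (j + 1) = exp (real (j + 1) * ln 2)"
    by (subst exp_of_nat_mult) simp
  ultimately have "2 ^ (j + 1) * exp (- (k * a))
      \<le> exp (real (j + 1) * ln 2) * exp (- (real (j + 1) * (c * a)))"
    unfolding two by (intro mult_left_mono) simp_all
  also have "exp (real (j + 1) * ln 2) * exp (- (real (j + 1) * (c * a)))
      = exp (ln 2 - c * a) ^ (j + 1)"
    by (simp add: exp_of_nat_mult[symmetric] exp_add[symmetric] algebra_simps)
  finally show ?thesis .
qed

lemma dyadic_index:
  fixes n :: nat
  assumes n: "2 ^ J \<le> n"
  obtains j where "J \<le> j" and "n < 2 ^ (j + 1)" and "real j \<le> ln n / ln 2"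
proof -
  have "(1::nat) \<le> 2 ^ J" by simp
  with n have "1 \<le> n" by linarith
  then obtain j where j: "2 ^ j \<le> n" "n < 2 ^ (j + 1)"
    using ex_power_ivl1[of 2 n] by auto
  then have "(2::nat) ^ J < 2 ^ (j + 1)" using n by linarith
  then have "J \<le> j" using power_less_imp_less_exp[of "2::nat" J "j + 1"] by simp
  have "(2::real) ^ j \<le> real n"
    using j(1) by (metis of_nat_le_iff of_nat_numeral of_nat_power)
  then have "ln ((2::real) ^ j) \<le> ln n"
    using \<open>1 \<le> n\<close> by (subst ln_le_cancel_iff) auto
  then have "real j \<le> ln n / ln 2"
    by (simp add: ln_realpow field_simps)
  with \<open>J \<le> j\<close> j(2) show ?thesis by (rule that)
qed

lemma AE_tendsto_of_eventually_bounds: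
  fixes f :: "'a \<Rightarrow> nat \<Rightarrow> real"
  assumes upper: "\<And>e. 0 < e \<Longrightarrow> AE x in M. eventually (\<lambda>n. f x n \<le> l + e) sequentially"
    and lower: "\<And>e. 0 < e \<Longrightarrow> AE x in M. eventually (\<lambda>n. l - e \<le> f x n) sequentially"
  shows "AE x in M. f x \<longlonglongrightarrow> l"
proof -
  have "AE x in M. \<forall>k::nat. eventually (\<lambda>n. \<bar>f x n - l\<bar> \<le> 1 / Suc k) sequentially"
  proof (subst AE_all_countable, intro allI)
    fix k :: nat
    have "AE x in M. eventually (\<lambda>n. f x n \<le> l + 1 / Suc k) sequentially
        \<and> eventually (\<lambda>n. l - 1 / Suc k \<le> f x n) sequentially"
      by (intro AE_conjI upper lower) simp_all
    then show "AE x in M. eventually (\<lambda>n. \<bar>f x n - l\<bar> \<le> 1 / Suc k) sequentially"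
      by (elim AE_mp) (auto intro!: AE_I2 elim: eventually_elim2)
  qed
  then show ?thesis
  proof (rule AE_mp, intro AE_I2 impI tendstoI)
    fix x and r :: real
    assume bounds: "\<forall>k::nat. eventually (\<lambda>n. \<bar>f x n - l\<bar> \<le> 1 / Suc k) sequentially" and "0 < r"
    then obtain k where "1 / Suc k < r" using reals_Archimedean by (auto simp: inverse_eq_divide)
    with bounds[rule_format, of k] show "eventually (\<lambda>n. dist (f x n) l < r) sequentially"
      by (auto simp: dist_real_def elim: eventually_mono)
  qed
qed

section \<open>Words, windows and sums over words\<close>

definition words :: "nat \<Rightarrow> 'a list set" where
  "words n = {xs. length xs = n}"

definition sum_words :: "nat \<Rightarrow> ('a::finite list \<Rightarrow> real) \<Rightarrow> real" where
  "sum_words n f = (\<Sum>xs\<in>words n. f xs)"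

lemma finite_words [simp]: "finite (words n :: 'a::finite list set)"
  using finite_lists_length_eq[of "UNIV :: 'a set" n] by (simp add: words_def)

lemma words_add: "words (m + n) = (\<lambda>(xs, ys). xs @ ys) ` (words m \<times> words n)"
proof
  show "words (m + n) \<subseteq> (\<lambda>(xs, ys). xs @ ys) ` (words m \<times> words n)"
  proof
    fix zs assume "zs \<in> words (m + n)"
    then show "zs \<in> (\<lambda>(xs, ys). xs @ ys) ` (words m \<times> words n)"
      by (auto simp: words_def intro!: image_eqI[of _ _ "(take m zs, drop m zs)"])
  qed
qed (auto simp: words_def)

lemma sum_words_add:
  "sum_words (m + n) f = sum_words m (\<lambda>xs. sum_words n (\<lambda>ys. f (xs @ ys)))"
proof -
  have inj: "inj_on (\<lambda>(xs, ys). xs @ ys) (words m \<times> words n)"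
    by (auto simp: inj_on_def words_def)
  have "sum_words (m + n) f = (\<Sum>z\<in>words m \<times> words n. f (case z of (xs, ys) \<Rightarrow> xs @ ys))"
    unfolding sum_words_def words_add by (subst sum.reindex[OF inj]) (simp add: comp_def)
  also have "\<dots> = sum_words m (\<lambda>xs. sum_words n (\<lambda>ys. f (xs @ ys)))"
    unfolding sum_words_def by (simp add: sum.cartesian_product prod.case_distrib)
  finally show ?thesis .
qed

lemma sum_words_0 [simp]: "sum_words 0 f = f []"
  by (simp add: sum_words_def words_def)

lemma words_1: "words 1 = range (\<lambda>x. [x])"
  by (auto simp: words_def length_Suc_conv)

lemma sum_words_1: "sum_words 1 f = (\<Sum>x\<in>UNIV. f [x])"
  unfolding sum_words_def words_1 by (subst sum.reindex) (auto simp: inj_on_def)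

lemma sum_words_Suc: "sum_words (Suc n) f = sum_words n (\<lambda>xs. \<Sum>x\<in>UNIV. f (xs @ [x]))"
  by (simp only: Suc_eq_plus1 sum_words_add sum_words_1)

lemma sum_words_cong: "(\<And>xs. length xs = n \<Longrightarrow> f xs = g xs) \<Longrightarrow> sum_words n f = sum_words n g"
  unfolding sum_words_def by (rule sum.cong) (auto simp: words_def)

lemma sum_words_mono: "(\<And>xs. length xs = n \<Longrightarrow> f xs \<le> g xs) \<Longrightarrow> sum_words n f \<le> sum_words n g"
  unfolding sum_words_def by (rule sum_mono) (auto simp: words_def)

lemma sum_words_nonneg: "(\<And>xs. length xs = n \<Longrightarrow> 0 \<le> f xs) \<Longrightarrow> 0 \<le> sum_words n f"
  unfolding sum_words_def by (rule sum_nonneg) (auto simp: words_def)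

lemma sum_words_cmult: "sum_words n (\<lambda>xs. c * f xs) = c * sum_words n f"
  unfolding sum_words_def by (simp add: sum_distrib_left)

lemma sum_words_multc: "sum_words n (\<lambda>xs. f xs * c) = sum_words n f * c"
  unfolding sum_words_def by (simp add: sum_distrib_right)

lemma sum_words_diff: "sum_words n (\<lambda>xs. f xs - g xs) = sum_words n f - sum_words n g"
  unfolding sum_words_def by (simp add: sum_subtractf)

lemma sum_words_swap: "sum_words n (\<lambda>xs. \<Sum>c\<in>S. f c xs) = (\<Sum>c\<in>S. sum_words n (f c))"
  unfolding sum_words_def by (rule sum.swap)

lemma sum_words_of_bool: "sum_words n (\<lambda>xs. g xs * of_bool (P xs))
    = (\<Sum>xs\<in>words n \<inter> {xs. P xs}. g xs)"
  by (simp add: sum_words_def)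

lemma sum_words_delta: "length v = n \<Longrightarrow> sum_words n (\<lambda>xs. g xs * of_bool (xs = v)) = g v"
proof -
  assume "length v = n"
  then have "words n \<inter> {xs. xs = v} = {v}" by (auto simp: words_def)
  then show ?thesis by (simp add: sum_words_of_bool)
qed

(* Indices start at 1, as for U: window u a K = [u (a + 1), ..., u (a + K)]. *)
definition window :: "(nat \<Rightarrow> 'a) \<Rightarrow> nat \<Rightarrow> nat \<Rightarrow> 'a list" where
  "window u a K = map (\<lambda>i. u (a + 1 + i)) [0..<K]"

lemma length_window [simp]: "length (window u a K) = K"
  by (simp add: window_def)

lemma drop_window: "drop a (window u 0 (a + K)) = window u a K"
  by (simp add: window_def drop_map list_eq_iff_nth_eq)

lemma take_drop_window: "t + j \<le> B \<Longrightarrow> take j (drop t (window u a B)) = window u (a + t) j"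
  by (simp add: window_def list_eq_iff_nth_eq add.assoc)

lemma ball_atLeast1_atMost_iff: "(\<forall>i\<in>{1..N}. P i) \<longleftrightarrow> (\<forall>i<N. P (Suc i))"
proof -
  have "{1..N} = Suc ` {..<N}"
    by (simp add: lessThan_atLeast0 atLeastLessThanSuc_atLeastAtMost)
  then show ?thesis by auto
qed

lemma length_sprefix [simp]: "length (sprefix s k) = k"
  by (simp add: sprefix_def)

lemma rev_sprefix_Suc: "rev (sprefix s (Suc j)) = s (Suc j) # rev (sprefix s j)"
  by (simp add: sprefix_def)

section \<open>Probabilities of words under a stationary chain\<close>

fun path_prob :: "('a \<Rightarrow> 'a \<Rightarrow> real) \<Rightarrow> 'a \<Rightarrow> 'a list \<Rightarrow> real" where
  "path_prob Q a [] = 1"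
| "path_prob Q a (x # xs) = Q a x * path_prob Q x xs"

definition word_prob :: "('a \<Rightarrow> real) \<Rightarrow> ('a \<Rightarrow> 'a \<Rightarrow> real) \<Rightarrow> 'a list \<Rightarrow> real" where
  "word_prob p Q xs = (case xs of [] \<Rightarrow> 1 | x # ys \<Rightarrow> p x * path_prob Q x ys)"

lemma word_prob_Nil [simp]: "word_prob p Q [] = 1"
  and word_prob_Cons [simp]: "word_prob p Q (x # ys) = p x * path_prob Q x ys"
  by (simp_all add: word_prob_def)

lemma path_prob_append: "path_prob Q a (xs @ ys)
    = path_prob Q a xs * path_prob Q (last (a # xs)) ys"
  by (induction xs arbitrary: a) auto

lemma word_prob_append: "xs \<noteq> [] \<Longrightarrow> word_prob p Q (xs @ ys)
    = word_prob p Q xs * path_prob Q (last xs) ys"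
  by (cases xs) (auto simp: path_prob_append)

lemma path_prob_eq_prod: "path_prob Q x ys = (\<Prod>i<length ys. Q ((x # ys) ! i) (ys ! i))"
proof (induction ys arbitrary: x)
  case (Cons y ys)
  show ?case by (simp add: Cons prod.lessThan_Suc_shift del: prod.lessThan_Suc)
qed simp

lemma mpow_Suc_eq_sum_words:
  "mpow Q (Suc n) a c = sum_words n (\<lambda>xs. path_prob Q a xs * Q (last (a # xs)) c)"
proof (induction n arbitrary: c)
  case 0
  show ?case by (simp add: of_bool_def[symmetric])
next
  case (Suc n)
  have "mpow Q (Suc (Suc n)) a c
      = (\<Sum>b\<in>UNIV. sum_words n (\<lambda>xs. path_prob Q a xs * Q (last (a # xs)) b) * Q b c)"
    by (simp only: mpow.simps(2)[of Q "Suc n"] Suc)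
  also have "\<dots> = sum_words n (\<lambda>xs. path_prob Q a xs * (\<Sum>b\<in>UNIV. Q (last (a # xs)) b * Q b c))"
    by (simp add: sum_words_multc[symmetric] sum_words_swap[symmetric] sum_distrib_left mult.assoc)
  also have "\<dots> = sum_words (Suc n) (\<lambda>xs. path_prob Q a xs * Q (last (a # xs)) c)"
    by (simp add: sum_words_Suc path_prob_append sum_distrib_left mult.assoc)
  finally show ?case .
qed

lemma irreducible_matrix_uniform_bound:
  assumes "irreducible_matrix Q"
  obtains N D \<delta> where "\<delta> > 0" and "\<And>a b. 1 \<le> N a b \<and> N a b \<le> D \<and> \<delta> \<le> mpow Q (N a b) a b"
proof -
  have "\<forall>x. \<exists>n. 0 < n \<and> 0 < mpow Q n (fst x) (snd x)"
    using assms by (simp add: irreducible_matrix_def)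
  then obtain f where f: "\<And>x. 0 < f x \<and> 0 < mpow Q (f x) (fst x) (snd x)" by metis
  define \<delta> where "\<delta> = Min (range (\<lambda>x. mpow Q (f x) (fst x) (snd x)))"
  have "\<delta> \<in> range (\<lambda>x. mpow Q (f x) (fst x) (snd x))" unfolding \<delta>_def by (rule Min_in) auto
  then have "\<delta> > 0" using f by auto
  moreover have "\<delta> \<le> mpow Q (f (a, b)) a b" for a b
    unfolding \<delta>_def by (rule Min_le) (auto intro!: image_eqI[where x="(a, b)"])
  moreover have "1 \<le> f (a, b)" and "f (a, b) \<le> Max (range f)" for a b
    using f[of "(a, b)"] by (auto intro: Max_ge)
  ultimately show ?thesis by (intro that[of \<delta> "\<lambda>a b. f (a, b)" "Max (range f)"]) auto
qed

definition avoids_blocks :: "'a list \<Rightarrow> nat \<Rightarrow> nat \<Rightarrow> nat \<Rightarrow> 'a list \<Rightarrow> bool" where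
  "avoids_blocks v B t0 m xs \<longleftrightarrow> (\<forall>i<m. \<not> sublist v (take B (drop (t0 + i * B) xs)))"

lemma avoids_blocks_Suc_append:
  assumes "length xs = t0 + m * B" and "length ys = B"
  shows "avoids_blocks v B t0 (Suc m) (xs @ ys) \<longleftrightarrow> avoids_blocks v B t0 m xs \<and> \<not> sublist v ys"
proof -
  have "take B (drop (t0 + i * B) (xs @ ys)) = take B (drop (t0 + i * B) xs)" if "i < m" for i
  proof -
    have "Suc i * B \<le> m * B" using that by (intro mult_le_mono1) simp
    then show ?thesis using assms(1) by simp
  qed
  moreover have "take B (drop (t0 + m * B) (xs @ ys)) = ys" using assms by simp
  ultimately show ?thesis
    unfolding avoids_blocks_def by (auto simp: less_Suc_eq simp del: take_append drop_append)
qed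

lemma avoids_blocks_window_iff:
  "avoids_blocks v B t0 m (window u 0 (t0 + m * B)) \<longleftrightarrow> (\<forall>i<m. \<not> sublist v (window u (t0 + i * B) B))"
proof -
  have "take B (drop (t0 + i * B) (window u 0 (t0 + m * B))) = window u (t0 + i * B) B"
      if "i < m" for i
  proof (rule take_drop_window[of _ _ _ _ 0, simplified])
    have "Suc i * B \<le> m * B" using that by (intro mult_le_mono1) simp
    then show "t0 + i * B + B \<le> t0 + m * B" by simp
  qed
  then show ?thesis by (auto simp: avoids_blocks_def)
qed

locale stationary_chain =
  fixes p :: "nucl \<Rightarrow> real" and Q :: "nucl \<Rightarrow> nucl \<Rightarrow> real"
  assumes stochastic: "stochastic_matrix Q" and invariant: "invariant_measure Q p"
begin

lemma Q_nonneg: "0 \<le> Q a b"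
  using stochastic by (simp add: stochastic_matrix_def)

lemma Q_row_sum: "(\<Sum>b\<in>UNIV. Q a b) = 1"
  using stochastic by (simp add: stochastic_matrix_def)

lemma p_nonneg: "0 \<le> p a"
  using invariant by (simp add: invariant_measure_def)

lemma p_sum: "(\<Sum>a\<in>UNIV. p a) = 1"
  using invariant by (simp add: invariant_measure_def)

lemma p_stationary: "(\<Sum>a\<in>UNIV. p a * Q a b) = p b"
  using invariant by (simp add: invariant_measure_def)

lemma p_le_1: "p a \<le> 1"
  using member_le_sum[of a UNIV p] p_nonneg p_sum by simp

lemma mpow_nonneg: "0 \<le> mpow Q n a b"
  by (induction n arbitrary: b) (auto intro!: sum_nonneg simp: Q_nonneg)

lemma path_prob_nonneg: "0 \<le> path_prob Q a xs"
  by (induction xs arbitrary: a) (auto simp: Q_nonneg)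

lemma word_prob_nonneg: "0 \<le> word_prob p Q xs"
  by (cases xs) (auto simp: p_nonneg path_prob_nonneg)

lemma sum_words_path_prob: "sum_words n (path_prob Q a) = 1"
proof (induction n)
  case (Suc n)
  have "sum_words (Suc n) (path_prob Q a)
      = sum_words n (\<lambda>xs. path_prob Q a xs * (\<Sum>x\<in>UNIV. Q (last (a # xs)) x))"
    unfolding sum_words_Suc by (simp add: path_prob_append sum_distrib_left)
  then show ?case using Suc by (simp add: Q_row_sum)
qed simp

lemma sum_words_word_prob_last:
  "n \<ge> 1 \<Longrightarrow> sum_words n (\<lambda>xs. word_prob p Q xs * g (last xs)) = (\<Sum>c\<in>UNIV. p c * g c)"
proof (induction n arbitrary: g rule: dec_induct)
  case base
  show ?case by (simp add: sum_words_1[unfolded One_nat_def])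
next
  case (step n)
  have "sum_words (Suc n) (\<lambda>xs. word_prob p Q xs * g (last xs))
      = sum_words n (\<lambda>xs. word_prob p Q xs * (\<lambda>c. \<Sum>x\<in>UNIV. Q c x * g x) (last xs))"
    unfolding sum_words_Suc
  proof (rule sum_words_cong)
    fix xs :: "nucl list" assume "length xs = n"
    then have "xs \<noteq> []" using step by auto
    then show "(\<Sum>x\<in>UNIV. word_prob p Q (xs @ [x]) * g (last (xs @ [x])))
        = word_prob p Q xs * (\<Sum>x\<in>UNIV. Q (last xs) x * g x)"
      by (simp add: word_prob_append sum_distrib_left mult.assoc)
  qed
  also have "\<dots> = (\<Sum>c\<in>UNIV. p c * (\<Sum>x\<in>UNIV. Q c x * g x))"
    by (rule step.IH)
  also have "\<dots> = (\<Sum>x\<in>UNIV. (\<Sum>c\<in>UNIV. p c * Q c x) * g x)"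
    by (simp add: sum_distrib_left sum_distrib_right mult.assoc) (rule sum.swap)
  also have "\<dots> = (\<Sum>x\<in>UNIV. p x * g x)"
    by (simp add: p_stationary)
  finally show ?case .
qed

lemma sum_words_word_prob: "sum_words n (word_prob p Q) = 1"
  using sum_words_word_prob_last[of n "\<lambda>_. 1"] by (cases "n = 0") (simp_all add: p_sum)

lemma sum_stationary_path_prob: "ys \<noteq> [] \<Longrightarrow> (\<Sum>c\<in>UNIV. p c * path_prob Q c ys) = word_prob p Q ys"
  by (cases ys) (simp_all add: sum_distrib_right[symmetric] mult.assoc[symmetric] p_stationary)

(* Stationarity: the law of the window at offset a does not depend on a. *)
lemma sum_words_word_prob_drop:
  assumes "K \<ge> 1"
  shows "sum_words (a + K) (\<lambda>xs. word_prob p Q xs * R (drop a xs))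
    = sum_words K (\<lambda>ys. word_prob p Q ys * R ys)"
proof (cases "a = 0")
  case False
  have "sum_words (a + K) (\<lambda>xs. word_prob p Q xs * R (drop a xs))
      = sum_words a (\<lambda>xs. word_prob p Q xs *
        (\<lambda>c. sum_words K (\<lambda>ys. path_prob Q c ys * R ys)) (last xs))"
    unfolding sum_words_add
  proof (rule sum_words_cong)
    fix xs :: "nucl list" assume "length xs = a"
    with False show "sum_words K (\<lambda>ys. word_prob p Q (xs @ ys) * R (drop a (xs @ ys)))
        = word_prob p Q xs * sum_words K (\<lambda>ys. path_prob Q (last xs) ys * R ys)"
      by (auto simp: word_prob_append sum_words_cmult[symmetric] mult.assoc)
  qed
  also have "\<dots> = (\<Sum>c\<in>UNIV. p c * sum_words K (\<lambda>ys. path_prob Q c ys * R ys))"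
    using False by (intro sum_words_word_prob_last) auto
  also have "\<dots> = sum_words K (\<lambda>ys. (\<Sum>c\<in>UNIV. p c * path_prob Q c ys) * R ys)"
    by (simp add: sum_words_swap[symmetric] sum_words_cmult[symmetric] sum_distrib_right mult.assoc)
  also have "\<dots> = sum_words K (\<lambda>ys. word_prob p Q ys * R ys)"
  proof (rule sum_words_cong)
    fix ys :: "nucl list" assume "length ys = K"
    then have "ys \<noteq> []" using assms by auto
    then show "(\<Sum>c\<in>UNIV. p c * path_prob Q c ys) * R ys = word_prob p Q ys * R ys"
      by (simp add: sum_stationary_path_prob)
  qed
  finally show ?thesis .
qed simp

lemma word_prob_Cons_le: "word_prob p Q (x # v) \<le> word_prob p Q v"
proof (cases v)
  case (Cons y w)
  have "word_prob p Q (x # v) = p x * Q x y * path_prob Q y w" by (simp add: Cons mult.assoc)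
  also have "\<dots> \<le> (\<Sum>x\<in>UNIV. p x * Q x y) * path_prob Q y w"
    by (intro mult_right_mono member_le_sum) (auto simp: p_nonneg Q_nonneg path_prob_nonneg)
  also have "\<dots> = word_prob p Q v" by (simp add: p_stationary Cons)
  finally show ?thesis .
qed (simp add: p_le_1)

lemma word_prob_le_path_prob: "word_prob p Q (y # w) \<le> path_prob Q y w"
  using p_le_1[of y] p_nonneg[of y] path_prob_nonneg[of y w] by (simp add: mult_left_le_one_le)

(* Only the paths that spell v right after their first n - 1 steps are counted. *)
lemma sum_words_path_prob_sublist_ge:
  assumes n: "1 \<le> n" and v: "v \<noteq> []" and B: "n - 1 + length v \<le> B"
  shows "mpow Q n a (hd v) * path_prob Q (hd v) (tl v)
    \<le> sum_words B (\<lambda>ys. path_prob Q a ys * of_bool (sublist v ys))"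
proof -
  define R where "R = B - (n - 1) - length v"
  have BB: "B = (n - 1) + (length v + R)" using B unfolding R_def by simp
  let ?f = "\<lambda>ys. path_prob Q a ys * of_bool (sublist v ys)"
  have f_at_v: "sum_words R (\<lambda>rs. ?f (zs @ v @ rs))
      = path_prob Q a zs * Q (last (a # zs)) (hd v) * path_prob Q (hd v) (tl v)" for zs
  proof -
    have "sublist v (zs @ v @ rs)" for rs
      unfolding sublist_def by blast
    moreover have "path_prob Q a (zs @ v @ rs)
        = path_prob Q a zs * path_prob Q (last (a # zs)) v * path_prob Q (last v) rs" for rs
      using v by (simp add: path_prob_append)
    ultimately have "sum_words R (\<lambda>rs. ?f (zs @ v @ rs))
        = path_prob Q a zs * path_prob Q (last (a # zs)) v * sum_words R (path_prob Q (last v))"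
      by (simp add: sum_words_cmult[symmetric])
    then show ?thesis
      using v by (cases v) (auto simp: sum_words_path_prob mult.assoc)
  qed
  have "mpow Q n a (hd v) * path_prob Q (hd v) (tl v)
      = sum_words (n - 1) (\<lambda>zs. path_prob Q a zs * Q (last (a # zs)) (hd v)
        * path_prob Q (hd v) (tl v))"
    using mpow_Suc_eq_sum_words[of Q "n - 1" a "hd v"] n by (simp add: sum_words_multc)
  also have "\<dots> = sum_words (n - 1) (\<lambda>zs. sum_words R (\<lambda>rs. ?f (zs @ v @ rs)))"
    unfolding f_at_v ..
  also have "\<dots> = sum_words (n - 1) (\<lambda>zs. sum_words (length v)
      (\<lambda>us. sum_words R (\<lambda>rs. ?f (zs @ us @ rs)) * of_bool (us = v)))"
    by (simp add: sum_words_delta)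
  also have "\<dots> \<le> sum_words (n - 1)
      (\<lambda>zs. sum_words (length v) (\<lambda>us. sum_words R (\<lambda>rs. ?f (zs @ us @ rs))))"
    by (intro sum_words_mono) (auto intro!: sum_words_nonneg simp: path_prob_nonneg)
  also have "\<dots> = sum_words B ?f"
    unfolding BB sum_words_add by simp
  finally show ?thesis .
qed

lemma sum_words_path_prob_not_sublist_le:
  assumes "1 \<le> n" and "v \<noteq> []" and "n - 1 + length v \<le> B"
  shows "sum_words B (\<lambda>ys. path_prob Q a ys * of_bool (\<not> sublist v ys))
    \<le> 1 - mpow Q n a (hd v) * word_prob p Q v"
proof -
  have "sum_words B (\<lambda>ys. path_prob Q a ys * of_bool (\<not> sublist v ys))
      = sum_words B (\<lambda>ys. path_prob Q a ys - path_prob Q a ys * of_bool (sublist v ys))"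
    by (rule sum_words_cong) auto
  then have "sum_words B (\<lambda>ys. path_prob Q a ys * of_bool (\<not> sublist v ys))
      = 1 - sum_words B (\<lambda>ys. path_prob Q a ys * of_bool (sublist v ys))"
    by (simp add: sum_words_diff sum_words_path_prob)
  moreover have "mpow Q n a (hd v) * word_prob p Q v \<le> mpow Q n a (hd v) * path_prob Q (hd v) (tl v)"
    using word_prob_le_path_prob[of "hd v" "tl v"] \<open>v \<noteq> []\<close> mpow_nonneg
    by (intro mult_left_mono) auto
  ultimately show ?thesis
    using sum_words_path_prob_sublist_ge[OF assms, of a] by linarith
qed

(* Markov property: whatever state the chain is in, the next block avoids v with
   probability at most c. *)
lemma sum_words_avoids_blocks_le:
  assumes t0: "1 \<le> t0"
    and c: "\<And>a. sum_words B (\<lambda>ys. path_prob Q a ys * of_bool (\<not> sublist v ys)) \<le> c"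
  shows "sum_words (t0 + m * B) (\<lambda>xs. word_prob p Q xs * of_bool (avoids_blocks v B t0 m xs))
      \<le> c ^ m"
proof (induction m)
  case 0
  show ?case by (simp add: avoids_blocks_def sum_words_word_prob)
next
  case (Suc m)
  have "0 \<le> c"
    using c[of A] sum_words_nonneg[of B "\<lambda>ys. path_prob Q A ys * of_bool (\<not> sublist v ys)"]
    by (simp add: path_prob_nonneg)
  have split_Suc: "t0 + Suc m * B = (t0 + m * B) + B" by simp
  have "sum_words (t0 + Suc m * B) (\<lambda>xs. word_prob p Q xs * of_bool (avoids_blocks v B t0 (Suc m) xs))
      = sum_words (t0 + m * B) (\<lambda>xs. word_prob p Q xs * of_bool (avoids_blocks v B t0 m xs)
          * sum_words B (\<lambda>ys. path_prob Q (last xs) ys * of_bool (\<not> sublist v ys)))"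
    unfolding split_Suc sum_words_add[of "t0 + m * B" B]
  proof (rule sum_words_cong)
    fix xs :: "nucl list" assume xs: "length xs = t0 + m * B"
    then have "xs \<noteq> []" using t0 by auto
    with xs show "sum_words B
        (\<lambda>ys. word_prob p Q (xs @ ys) * of_bool (avoids_blocks v B t0 (Suc m) (xs @ ys)))
        = word_prob p Q xs * of_bool (avoids_blocks v B t0 m xs)
          * sum_words B (\<lambda>ys. path_prob Q (last xs) ys * of_bool (\<not> sublist v ys))"
      by (auto simp: sum_words_cmult[symmetric] word_prob_append avoids_blocks_Suc_append
          intro!: sum_words_cong)
  qed
  also have "\<dots> \<le> sum_words (t0 + m * B)
      (\<lambda>xs. word_prob p Q xs * of_bool (avoids_blocks v B t0 m xs) * c)"
    by (intro sum_words_mono mult_left_mono c) (auto simp: word_prob_nonneg)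
  also have "\<dots> \<le> c ^ m * c"
    using Suc \<open>0 \<le> c\<close> by (simp add: sum_words_multc mult_right_mono)
  finally show ?case by (simp add: mult.commute)
qed

lemma word_prob_rev_sprefix_antimono:
  "j \<le> K \<Longrightarrow> word_prob p Q (rev (sprefix s K)) \<le> word_prob p Q (rev (sprefix s j))"
proof (induction K rule: dec_induct)
  case (step K)
  then show ?case
    using word_prob_Cons_le[of "s (Suc K)" "rev (sprefix s K)"] by (simp add: rev_sprefix_Suc)
qed simp

end

locale stationary_process = stationary_chain p Q + prob_space M
  for p Q and M :: "'w measure" +
  fixes U :: "nat \<Rightarrow> 'w \<Rightarrow> nucl"
  assumes markov: "markov_chain_from M U p Q"
begin

lemma sets_U_eq: "{\<omega>\<in>space M. U i \<omega> = c} \<in> sets M"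
proof -
  have "U i \<in> measurable M (count_space UNIV)"
    using markov by (simp add: markov_chain_from_def)
  then have "U i -` {c} \<inter> space M \<in> sets M" by (rule measurable_sets) simp
  moreover have "U i -` {c} \<inter> space M = {\<omega>\<in>space M. U i \<omega> = c}" by auto
  ultimately show ?thesis by simp
qed

lemma sets_window_eq: "{\<omega>\<in>space M. window (\<lambda>i. U i \<omega>) a K = xs} \<in> sets M"
proof (cases "length xs = K")
  case True
  have "{\<omega>\<in>space M. window (\<lambda>i. U i \<omega>) a K = xs} = {\<omega>\<in>space M. \<forall>i\<in>{..<K}. U (a + 1 + i) \<omega> = xs ! i}"
    using True by (auto simp: window_def list_eq_iff_nth_eq)
  also have "\<dots> \<in> sets M"
    by (intro sets.sets_Collect_finite_All) (auto intro: sets_U_eq)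
  finally show ?thesis .
next
  case False
  then have empty: "{\<omega>\<in>space M. window (\<lambda>i. U i \<omega>) a K = xs} = {}" by auto
  show ?thesis unfolding empty by simp
qed

lemma sets_window: "{\<omega>\<in>space M. R (window (\<lambda>i. U i \<omega>) a K)} \<in> sets M"
proof -
  have "{\<omega>\<in>space M. R (window (\<lambda>i. U i \<omega>) a K)}
      = (\<Union>xs\<in>{xs\<in>words K. R xs}. {\<omega>\<in>space M. window (\<lambda>i. U i \<omega>) a K = xs})"
    by (auto simp: words_def)
  also have "\<dots> \<in> sets M"
    by (intro sets.finite_UN) (auto intro: sets_window_eq)
  finally show ?thesis .
qed

lemma prob_window_eq: "length xs = N \<Longrightarrow> prob {\<omega>\<in>space M. window (\<lambda>i. U i \<omega>) 0 N = xs}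
    = word_prob p Q xs"
proof (cases xs)
  case Nil
  moreover assume "length xs = N"
  ultimately show ?thesis by (simp add: window_def prob_space)
next
  case (Cons x ys)
  assume len: "length xs = N"
  define a where "a = (\<lambda>i. xs ! (i - 1))"
  have "{\<omega>\<in>space M. window (\<lambda>i. U i \<omega>) 0 N = xs} = {\<omega>\<in>space M. \<forall>i\<in>{1..N}. U i \<omega> = a i}"
  proof -
    have "window (\<lambda>i. U i \<omega>) 0 N = xs \<longleftrightarrow> (\<forall>i<N. U (Suc i) \<omega> = xs ! i)" for \<omega>
      using len by (auto simp: window_def list_eq_iff_nth_eq)
    also have "(\<forall>i<N. U (Suc i) \<omega> = xs ! i) \<longleftrightarrow> (\<forall>i\<in>{1..N}. U i \<omega> = a i)" for \<omega>
      by (simp only: ball_atLeast1_atMost_iff) (simp add: a_def)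
    finally show ?thesis by auto
  qed
  also have "prob \<dots> = p (a 1) * (\<Prod>i\<in>{1..<N}. Q (a i) (a (Suc i)))"
    using markov len Cons by (simp add: markov_chain_from_def)
  also have "\<dots> = word_prob p Q xs"
  proof -
    have "(\<Prod>i\<in>{1..<N}. Q (a i) (a (Suc i))) = (\<Prod>i<length ys. Q (a (Suc i)) (a (Suc (Suc i))))"
      using len Cons prod.shift_bounds_Suc_ivl[of "\<lambda>i. Q (a i) (a (Suc i))" 0 "length ys"]
      by (simp add: atLeast0LessThan)
    also have "\<dots> = path_prob Q x ys"
      by (simp add: path_prob_eq_prod a_def Cons)
    finally show ?thesis by (simp add: a_def Cons)
  qed
  finally show ?thesis .
qed

lemma prob_window_initial: "
    prob {\<omega>\<in>space M. R (window (\<lambda>i. U i \<omega>) 0 N)}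
    = sum_words N (\<lambda>xs. word_prob p Q xs * of_bool (R xs))"
proof -
  let ?S = "words N \<inter> {xs. R xs}"
  have "{\<omega>\<in>space M. R (window (\<lambda>i. U i \<omega>) 0 N)}
      = (\<Union>xs\<in>?S. {\<omega>\<in>space M. window (\<lambda>i. U i \<omega>) 0 N = xs})"
    by (auto simp: words_def)
  then have "prob {\<omega>\<in>space M. R (window (\<lambda>i. U i \<omega>) 0 N)}
      = (\<Sum>xs\<in>?S. prob {\<omega>\<in>space M. window (\<lambda>i. U i \<omega>) 0 N = xs})"
    by (simp only:) (rule finite_measure_finite_Union,
        auto intro: sets_window_eq simp: disjoint_family_on_def)
  also have "\<dots> = (\<Sum>xs\<in>?S. word_prob p Q xs)"
    by (rule sum.cong) (auto simp: words_def prob_window_eq)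
  finally show ?thesis by (simp add: sum_words_of_bool)
qed

lemma prob_window: "K \<ge> 1 \<Longrightarrow>
    prob {\<omega>\<in>space M. R (window (\<lambda>i. U i \<omega>) a K)}
    = sum_words K (\<lambda>ys. word_prob p Q ys * of_bool (R ys))"
  using prob_window_initial[of "\<lambda>xs. R (drop a xs)" "a + K"]
    sum_words_word_prob_drop[of K a "\<lambda>ys. of_bool (R ys)"]
  by (simp add: drop_window)

lemma pword_eq_word_prob: "pword M U s j = word_prob p Q (rev (sprefix s j))"
proof -
  have "(\<forall>i\<in>{1..j}. U i \<omega> = s (j + 1 - i)) \<longleftrightarrow> window (\<lambda>i. U i \<omega>) 0 j = rev (sprefix s j)" for \<omega>
  proof -
    have "window (\<lambda>i. U i \<omega>) 0 j = rev (sprefix s j) \<longleftrightarrow> (\<forall>i<j. U (Suc i) \<omega> = s (j - i))"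
      by (auto simp: window_def sprefix_def list_eq_iff_nth_eq rev_nth Suc_diff_Suc)
    also have "\<dots> \<longleftrightarrow> (\<forall>i\<in>{1..j}. U i \<omega> = s (j + 1 - i))"
      by (simp only: ball_atLeast1_atMost_iff) simp
    finally show ?thesis ..
  qed
  then have "pword M U s j = prob {\<omega>\<in>space M. window (\<lambda>i. U i \<omega>) 0 j = rev (sprefix s j)}"
    by (simp add: pword_def)
  also have "\<dots> = word_prob p Q (rev (sprefix s j))"
    by (simp add: prob_window_eq)
  finally show ?thesis .
qed

lemma sets_avoids_blocks: "{\<omega>\<in>space M. \<forall>i<m. \<not> sublist v (window (\<lambda>i. U i \<omega>) (t0 + i * B) B)}
    \<in> sets M"
  unfolding avoids_blocks_window_iff[symmetric] by (rule sets_window)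

end

section \<open>The CGR-tree\<close>

lemma length_Wword [simp]: "length (Wword u n) = n"
  by (simp add: Wword_def)

lemma take_Wword: "j \<le> t \<Longrightarrow> take j (Wword u t) = rev (window u (t - j) j)"
  by (auto simp: Wword_def window_def list_eq_iff_nth_eq rev_nth Suc_diff_Suc)

lemma cgr_tree_Suc_eq:
  "cgr_tree u (Suc n) = insert (take (LEAST k. 1 \<le> k \<and> take k (Wword u (Suc n)) \<notin> cgr_tree u n)
    (Wword u (Suc n))) (cgr_tree u n)"
  by (simp add: Let_def)

declare cgr_tree.simps(2) [simp del]

lemma Nil_in_cgr_tree: "[] \<in> cgr_tree u n"
  by (induction n) (auto simp: cgr_tree_Suc_eq)

lemma cgr_tree_mono: "m \<le> n \<Longrightarrow> cgr_tree u m \<subseteq> cgr_tree u n"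
  by (induction n rule: dec_induct) (auto simp: cgr_tree_Suc_eq)

lemma cgr_tree_node:
  "w \<in> cgr_tree u n \<Longrightarrow> w = [] \<or> (\<exists>m\<in>{1..n}. \<exists>k. w = take k (Wword u m))"
  by (induction n arbitrary: w) (auto simp: cgr_tree_Suc_eq, force)

lemma length_le_of_cgr_tree: "w \<in> cgr_tree u n \<Longrightarrow> length w \<le> n"
  using cgr_tree_node[of w u n] by auto

lemma take_in_cgr_tree: "w \<in> cgr_tree u n \<Longrightarrow> take k w \<in> cgr_tree u n"
proof (induction n arbitrary: w)
  case (Suc n)
  define W where "W = Wword u (Suc n)"
  define k0 where "k0 = (LEAST k. 1 \<le> k \<and> take k W \<notin> cgr_tree u n)"
  have T: "cgr_tree u (Suc n) = insert (take k0 W) (cgr_tree u n)"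
    unfolding cgr_tree_Suc_eq k0_def W_def ..
  have below_k0: "take k W \<in> cgr_tree u n" if "1 \<le> k" "k < k0" for k
    using not_less_Least[of k "\<lambda>k. 1 \<le> k \<and> take k W \<notin> cgr_tree u n"] that by (simp add: k0_def)
  show ?case
  proof (cases "w \<in> cgr_tree u n")
    case True
    then show ?thesis using Suc.IH cgr_tree_mono[of n "Suc n"] by auto
  next
    case False
    then have "w = take k0 W" using Suc.prems T by auto
    moreover have "take (min k k0) W \<in> cgr_tree u (Suc n)"
      using below_k0[of k] Nil_in_cgr_tree[of u "Suc n"] T
      by (cases "k0 \<le> k"; cases "k = 0") (auto simp: min_def)
    ultimately show ?thesis by (simp add: min.commute)
  qed
qed simp

lemma take_Wword_in_cgr_tree:
  assumes "1 \<le> j" and "j \<le> t" and parent: "take (j - 1) (Wword u t) \<in> cgr_tree u (t - 1)"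
  shows "take j (Wword u t) \<in> cgr_tree u t"
proof -
  obtain n where t: "t = Suc n" using assms by (cases t) auto
  define W where "W = Wword u (Suc n)"
  define P where "P = (\<lambda>k. 1 \<le> k \<and> take k W \<notin> cgr_tree u n)"
  have T: "cgr_tree u (Suc n) = insert (take (Least P) W) (cgr_tree u n)"
    unfolding cgr_tree_Suc_eq P_def W_def ..
  show ?thesis
  proof (cases "P j")
    case True
    have "\<not> P k" if "k < j" for k
      using that take_in_cgr_tree[OF parent, of k] by (simp add: P_def t W_def min_absorb1)
    then have "Least P = j"
      using True by (intro Least_equality) (auto intro: leI)
    then show ?thesis using T t W_def by simp
  next
    case False
    then show ?thesis using assms T t W_def by (auto simp: P_def)
  qed
qed

lemma finite_Xn_set: "finite {k. sprefix s k \<in> cgr_tree u n}"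
proof (rule finite_subset)
  show "{k. sprefix s k \<in> cgr_tree u n} \<subseteq> {..n}"
    using length_le_of_cgr_tree by fastforce
qed simp

lemma le_Xn: "sprefix s K \<in> cgr_tree u n \<Longrightarrow> K \<le> Xn u n s"
  unfolding Xn_def by (rule Max_ge[OF finite_Xn_set]) simp

lemma sprefix_in_cgr_tree_Xn: "sprefix s (Xn u n s) \<in> cgr_tree u n"
proof -
  have "sprefix s 0 \<in> cgr_tree u n" using Nil_in_cgr_tree by (simp add: sprefix_def)
  then have "Xn u n s \<in> {k. sprefix s k \<in> cgr_tree u n}"
    unfolding Xn_def by (intro Max_in[OF finite_Xn_set]) auto
  then show ?thesis by simp
qed

lemma occurrence_of_le_Xn:
  assumes "K \<le> Xn u n s" and "1 \<le> K"
  obtains m where "K \<le> m" and "m \<le> n" and "take K (Wword u m) = sprefix s K"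
proof -
  let ?k = "Xn u n s"
  have "sprefix s ?k \<noteq> []" using assms by (auto simp: sprefix_def)
  then obtain m k' where m: "m \<in> {1..n}" "sprefix s ?k = take k' (Wword u m)"
    using cgr_tree_node[OF sprefix_in_cgr_tree_Xn] by blast
  then have "length (sprefix s ?k) = length (take k' (Wword u m))" by simp
  then have "?k = min k' m" by simp
  moreover have "sprefix s K = take K (sprefix s ?k)"
    using assms(1) by (simp add: sprefix_def take_map)
  ultimately show ?thesis
    using that[of m] m assms(1) by (simp add: min_def split: if_splits)
qed

lemma sprefix_in_cgr_tree:
  assumes occ: "\<And>j. j \<in> {1..K} \<Longrightarrow>
      \<exists>t. b (j - 1) < t \<and> t \<le> b j \<and> j \<le> t \<and> take j (Wword u t) = sprefix s j"
  shows "j \<le> K \<Longrightarrow> sprefix s j \<in> cgr_tree u (b j)"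
proof (induction j)
  case 0
  show ?case using Nil_in_cgr_tree by (simp add: sprefix_def)
next
  case (Suc j)
  obtain t where t: "b j < t" "t \<le> b (Suc j)" "Suc j \<le> t"
      and occ_t: "take (Suc j) (Wword u t) = sprefix s (Suc j)"
    using occ[of "Suc j"] Suc.prems by auto
  have "take j (Wword u t) = take j (take (Suc j) (Wword u t))" by simp
  also have "\<dots> = sprefix s j" using occ_t by (simp add: sprefix_def take_map)
  moreover have "b j \<le> t - 1" using t(1) by simp
  then have "sprefix s j \<in> cgr_tree u (t - 1)"
    using Suc cgr_tree_mono[of "b j" "t - 1" u] by auto
  ultimately have "take (Suc j - 1) (Wword u t) \<in> cgr_tree u (t - 1)" by simp
  then have "take (Suc j) (Wword u t) \<in> cgr_tree u t"
    using t by (intro take_Wword_in_cgr_tree) auto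
  then show ?case using t occ_t cgr_tree_mono[of t "b (Suc j)" u] by auto
qed

lemma Wword_prefix_of_sublist_window:
  assumes "sublist (rev (sprefix s j)) (window u a B)" and "1 \<le> j"
  obtains t where "a < t" and "t \<le> a + B" and "j \<le> t" and "take j (Wword u t) = sprefix s j"
proof -
  obtain ps ss where split: "window u a B = ps @ rev (sprefix s j) @ ss"
    using assms(1) by (auto simp: sublist_def)
  have "length (window u a B) = length (ps @ rev (sprefix s j) @ ss)" by (simp only: split)
  then have "length ps + j \<le> B" by simp
  moreover from this have "window u (a + length ps) j = rev (sprefix s j)"
    using take_drop_window[of "length ps" j B u a] split by simp
  ultimately show ?thesis
    using that[of "a + length ps + j"] take_Wword[of j "a + length ps + j" u] assms(2) by simp
qed

lemma window_of_Wword_prefix: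
  "take K (Wword u m) = sprefix s K \<Longrightarrow> K \<le> m \<Longrightarrow> window u (m - K) K = rev (sprefix s K)"
  by (metis rev_rev_ident take_Wword)

context stationary_process
begin

definition occurs_before :: "(nat \<Rightarrow> nucl) \<Rightarrow> nat \<Rightarrow> nat \<Rightarrow> 'w set" where
  "occurs_before s K N = {\<omega>\<in>space M. \<exists>a<N. window (\<lambda>i. U i \<omega>) a K = rev (sprefix s K)}"

lemma sets_occurs_before: "occurs_before s K N \<in> sets M"
proof -
  have "occurs_before s K N = (\<Union>a<N. {\<omega>\<in>space M. window (\<lambda>i. U i \<omega>) a K = rev (sprefix s K)})"
    by (auto simp: occurs_before_def)
  also have "\<dots> \<in> sets M"
    by (intro sets.finite_UN) (auto intro: sets_window_eq)
  finally show ?thesis .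
qed

lemma prob_occurs_before_le:
  assumes "1 \<le> K"
  shows "prob (occurs_before s K N) \<le> N * word_prob p Q (rev (sprefix s K))"
proof -
  have "occurs_before s K N = (\<Union>a\<in>{..<N}. {\<omega>\<in>space M. window (\<lambda>i. U i \<omega>) a K = rev (sprefix s K)})"
    by (auto simp: occurs_before_def)
  then have "prob (occurs_before s K N)
      \<le> (\<Sum>a\<in>{..<N}. prob {\<omega>\<in>space M. window (\<lambda>i. U i \<omega>) a K = rev (sprefix s K)})"
    by (simp only:) (rule finite_measure_subadditive_finite, auto intro: sets_window_eq)
  also have "\<dots> = N * word_prob p Q (rev (sprefix s K))"
    using prob_window[OF assms, of "\<lambda>ys. ys = rev (sprefix s K)"] by (simp add: sum_words_delta)
  finally show ?thesis .
qed

lemma Xn_less_of_notin_occurs_before: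
  assumes "\<omega> \<in> space M" and "\<omega> \<notin> occurs_before s K N" and "1 \<le> K" and "n \<le> N"
  shows "Xn (\<lambda>i. U i \<omega>) n s < K"
proof (rule ccontr)
  assume "\<not> Xn (\<lambda>i. U i \<omega>) n s < K"
  then obtain m where "K \<le> m" "m \<le> n" "take K (Wword (\<lambda>i. U i \<omega>) m) = sprefix s K"
    using occurrence_of_le_Xn[of K "\<lambda>i. U i \<omega>" n s] assms(3) by auto
  then have "window (\<lambda>i. U i \<omega>) (m - K) K = rev (sprefix s K)" and "m - K < N"
    using window_of_Wword_prefix assms by auto
  then show False using assms(1,2) unfolding occurs_before_def by blast
qed

lemma prob_avoids_blocks_le:
  assumes reach: "\<And>a b. 1 \<le> N a b \<and> N a b \<le> D \<and> \<delta> \<le> mpow Q (N a b) a b"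
    and v: "v \<noteq> []" and "D + length v \<le> B" and t0: "1 \<le> t0"
  shows "prob {\<omega>\<in>space M. \<forall>i<m. \<not> sublist v (window (\<lambda>i. U i \<omega>) (t0 + i * B) B)}
    \<le> exp (- (\<delta> * word_prob p Q v * m))"
proof -
  have "sum_words B (\<lambda>ys. path_prob Q a ys * of_bool (\<not> sublist v ys))
      \<le> 1 - \<delta> * word_prob p Q v" for a
  proof -
    let ?n = "N a (hd v)"
    have n: "1 \<le> ?n" "?n - 1 + length v \<le> B" "\<delta> \<le> mpow Q ?n a (hd v)"
      using reach[of a "hd v"] \<open>D + length v \<le> B\<close> by auto
    then have "\<delta> * word_prob p Q v \<le> mpow Q ?n a (hd v) * word_prob p Q v"
      by (intro mult_right_mono word_prob_nonneg)
    then show ?thesis using sum_words_path_prob_not_sublist_le[OF n(1) v n(2), of a] by linarith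
  qed
  note no_occurrence = this
  have "0 \<le> 1 - \<delta> * word_prob p Q v"
    using no_occurrence[of A]
        sum_words_nonneg[of B "\<lambda>ys. path_prob Q A ys * of_bool (\<not> sublist v ys)"]
    by (simp add: path_prob_nonneg)
  have "{\<omega>\<in>space M. \<forall>i<m. \<not> sublist v (window (\<lambda>i. U i \<omega>) (t0 + i * B) B)}
      = {\<omega>\<in>space M. avoids_blocks v B t0 m (window (\<lambda>i. U i \<omega>) 0 (t0 + m * B))}"
    by (simp add: avoids_blocks_window_iff)
  also have "prob \<dots> \<le> (1 - \<delta> * word_prob p Q v) ^ m"
    unfolding prob_window_initial using t0 no_occurrence by (rule sum_words_avoids_blocks_le)
  also have "\<dots> \<le> exp (- (\<delta> * word_prob p Q v)) ^ m"
    using \<open>0 \<le> 1 - \<delta> * word_prob p Q v\<close> exp_ge_add_one_self[of "- (\<delta> * word_prob p Q v)"]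
    by (intro power_mono) auto
  also have "\<dots> = exp (- (\<delta> * word_prob p Q v * m))"
    by (simp add: exp_of_nat_mult[symmetric] mult.commute)
  finally show ?thesis .
qed

(* The j-th prefix of s is looked for in m consecutive blocks of length B inside the j-th
   time segment [1 + (j - 1) L, 1 + j L]. *)
definition prefix_missed :: "(nat \<Rightarrow> nucl) \<Rightarrow> nat \<Rightarrow> nat \<Rightarrow> nat \<Rightarrow> nat \<Rightarrow> 'w set" where
  "prefix_missed s K L B m = (\<Union>j\<in>{1..K}. {\<omega>\<in>space M.
     \<forall>i<m. \<not> sublist (rev (sprefix s j)) (window (\<lambda>i. U i \<omega>) (1 + (j - 1) * L + i * B) B)})"

lemma sets_prefix_missed: "prefix_missed s K L B m \<in> sets M"
  unfolding prefix_missed_def by (intro sets.finite_UN ballI sets_avoids_blocks) simp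

lemma prob_prefix_missed_le:
  assumes reach: "\<And>a b. 1 \<le> N a b \<and> N a b \<le> D \<and> \<delta> \<le> mpow Q (N a b) a b"
    and "0 \<le> \<delta>" and "D + K \<le> B"
  shows "prob (prefix_missed s K L B m) \<le> K * exp (- (\<delta> * word_prob p Q (rev (sprefix s K)) * m))"
proof -
  have "prob (prefix_missed s K L B m) \<le> (\<Sum>j\<in>{1..K}. prob {\<omega>\<in>space M.
      \<forall>i<m. \<not> sublist (rev (sprefix s j)) (window (\<lambda>i. U i \<omega>) (1 + (j - 1) * L + i * B) B)})"
    unfolding prefix_missed_def
    by (rule finite_measure_subadditive_finite) (simp, blast intro: sets_avoids_blocks)
  also have "\<dots> \<le> (\<Sum>j\<in>{1..K}. exp (- (\<delta> * word_prob p Q (rev (sprefix s K)) * m)))"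
  proof (rule sum_mono)
    fix j assume j: "j \<in> {1..K}"
    have "prob {\<omega>\<in>space M. \<forall>i<m. \<not> sublist (rev (sprefix s j))
        (window (\<lambda>i. U i \<omega>) (1 + (j - 1) * L + i * B) B)}
        \<le> exp (- (\<delta> * word_prob p Q (rev (sprefix s j)) * m))"
    proof (rule prob_avoids_blocks_le[OF reach])
      show "rev (sprefix s j) \<noteq> []"
        using j by (simp flip: length_greater_0_conv)
    qed (use j assms(3) in auto)
    also have "\<dots> \<le> exp (- (\<delta> * word_prob p Q (rev (sprefix s K)) * m))"
    proof -
      have "\<delta> * word_prob p Q (rev (sprefix s K)) * m \<le> \<delta> * word_prob p Q (rev (sprefix s j)) * m"
        using word_prob_rev_sprefix_antimono[of j K s] j \<open>0 \<le> \<delta>\<close>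
        by (intro mult_right_mono mult_left_mono) simp_all
      then show ?thesis by simp
    qed
    finally show "prob {\<omega>\<in>space M. \<forall>i<m. \<not> sublist (rev (sprefix s j))
        (window (\<lambda>i. U i \<omega>) (1 + (j - 1) * L + i * B) B)}
        \<le> exp (- (\<delta> * word_prob p Q (rev (sprefix s K)) * m))" .
  qed
  finally show ?thesis by simp
qed

lemma prob_prefix_missed_by_time_le:
  fixes k q :: real
  assumes reach: "\<And>a b. 1 \<le> N a b \<and> N a b \<le> D \<and> \<delta> \<le> mpow Q (N a b) a b"
    and "0 \<le> \<delta>" and K: "1 \<le> K" "real K \<le> k"
    and q: "0 \<le> q" "q \<le> word_prob p Q (rev (sprefix s K))"
    and low: "0 \<le> ((real n - 1) / k - 1) / (real D + k) - 1"
  shows "prob (prefix_missed s K ((n - 1) div K) (D + K) ((n - 1) div K div (D + K)))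
    \<le> k * exp (- (\<delta> * q * (((real n - 1) / k - 1) / (real D + k) - 1)))"
proof -
  let ?m = "(n - 1) div K div (D + K)" and ?low = "((real n - 1) / k - 1) / (real D + k) - 1"
  have "prob (prefix_missed s K ((n - 1) div K) (D + K) ?m)
      \<le> K * exp (- (\<delta> * word_prob p Q (rev (sprefix s K)) * ?m))"
    using \<open>0 \<le> \<delta>\<close> by (intro prob_prefix_missed_le[OF reach]) auto
  also have "\<dots> \<le> k * exp (- (\<delta> * q * ?low))"
  proof (intro mult_mono)
    have "\<delta> * q * ?low \<le> \<delta> * word_prob p Q (rev (sprefix s K)) * ?m"
      using \<open>0 \<le> \<delta>\<close> q low real_div_div_ge[OF K] by (intro mult_mono mult_left_mono) auto
    then show "exp (- (\<delta> * word_prob p Q (rev (sprefix s K)) * ?m)) \<le> exp (- (\<delta> * q * ?low))"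
      by simp
  qed (use K in auto)
  finally show ?thesis .
qed

lemma Xn_ge_of_notin_prefix_missed:
  assumes "\<omega> \<in> space M" and "\<omega> \<notin> prefix_missed s K L B m" and "m * B \<le> L" and "1 + K * L \<le> n"
  shows "K \<le> Xn (\<lambda>i. U i \<omega>) n s"
proof -
  let ?u = "\<lambda>i. U i \<omega>"
  have "sprefix s K \<in> cgr_tree ?u (1 + K * L)"
  proof (rule sprefix_in_cgr_tree[where b = "\<lambda>j. 1 + j * L"])
    fix j assume j: "j \<in> {1..K}"
    then obtain i where i: "i < m"
        "sublist (rev (sprefix s j)) (window ?u (1 + (j - 1) * L + i * B) B)"
      using assms(1,2) unfolding prefix_missed_def by blast
    then obtain t where t: "1 + (j - 1) * L + i * B < t" "t \<le> 1 + (j - 1) * L + i * B + B"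
        "j \<le> t" "take j (Wword ?u t) = sprefix s j"
      using j by (elim Wword_prefix_of_sublist_window) auto
    have "Suc i * B \<le> m * B" using i by (intro mult_le_mono1) simp
    moreover have "(j - 1) * L + L = j * L" using j by (cases j) auto
    ultimately have "t \<le> 1 + j * L" using t(2) assms(3) by simp
    then show "\<exists>t. 1 + (j - 1) * L < t \<and> t \<le> 1 + j * L \<and> j \<le> t \<and> take j (Wword ?u t) = sprefix s j"
      using t by (intro exI[of _ t]) auto
  qed simp
  then show ?thesis using cgr_tree_mono[OF assms(4)] by (auto intro: le_Xn)
qed

end

section \<open>Depth of the branch of s\<close>

locale cgr_branch = stationary_process p Q M U for p Q M U +
  fixes s :: "nat \<Rightarrow> nucl" and h :: real
  assumes irreducible: "irreducible_matrix Q"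
    and entropy: "(\<lambda>n. (1 / real n) * ln (1 / pword M U s n)) \<longlonglongrightarrow> h"
    and h_pos: "0 < h"
begin

lemma eventually_word_prob_sprefix_bounds:
  assumes "0 < \<eta>"
  shows "eventually (\<lambda>j. exp (- (real j * (h + \<eta>))) \<le> word_prob p Q (rev (sprefix s j))
    \<and> word_prob p Q (rev (sprefix s j)) \<le> exp (- (real j * (h - \<eta>)))) sequentially"
proof -
  (* Closeness within h excludes the junk value ln (1 / 0) = 0. *)
  have "0 < min \<eta> h" using assms h_pos by simp
  from tendstoD[OF entropy this] eventually_gt_at_top[of 0] show ?thesis
  proof eventually_elim
    case (elim j)
    let ?w = "word_prob p Q (rev (sprefix s j))"
    have close: "\<bar>ln (1 / ?w) / real j - h\<bar> < min \<eta> h"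
      using elim(1) by (simp add: dist_real_def pword_eq_word_prob)
    then have "0 < ln (1 / ?w) / real j" by (auto simp: abs_less_iff)
    then have "0 < ln (1 / ?w)"
      using elim(2) by (simp add: zero_less_divide_iff)
    then have w_pos: "0 < ?w"
      using word_prob_nonneg[of "rev (sprefix s j)"] by (cases "?w = 0") auto
    have "real j * (h - \<eta>) < - ln ?w" and "- ln ?w < real j * (h + \<eta>)"
      using close elim(2) w_pos by (simp_all add: ln_div abs_less_iff field_simps)
    then have "exp (- (real j * (h + \<eta>))) \<le> exp (ln ?w)" and "exp (ln ?w) \<le> exp (- (real j * (h - \<eta>)))"
      by simp_all
    then show ?case using w_pos by simp
  qed
qed

lemma summable_prob_occurs_before:
  assumes c: "ln 2 / h < c" and K_ge: "\<And>j. c * (real j + 1) \<le> real (K j)"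
  shows "summable (\<lambda>j. prob (occurs_before s (K j) (2 ^ (j + 1))))"
proof -
  define \<eta> where "\<eta> = (h - ln 2 / c) / 2"
  define r where "r = exp (ln 2 - c * (h - \<eta>))"
  have "0 < ln (2::real)" by simp
  then have "0 < ln 2 / h" using h_pos by simp
  then have c_pos: "0 < c" using c by linarith
  then have "ln 2 / c < h" using c h_pos by (simp add: field_simps)
  then have "0 < \<eta>" and "ln 2 / c < h - \<eta>"
    by (simp_all add: \<eta>_def field_simps)
  then have "ln 2 < (h - \<eta>) * c"
    using pos_divide_less_eq[OF c_pos] by blast
  then have "r < 1" by (simp add: r_def mult.commute)
  have "0 < h - \<eta>"
    using \<open>ln 2 / c < h - \<eta>\<close> divide_pos_pos[OF \<open>0 < ln 2\<close> c_pos] by linarith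
  obtain J where J: "\<And>j. J \<le> j \<Longrightarrow> word_prob p Q (rev (sprefix s j)) \<le> exp (- (real j * (h - \<eta>)))"
    using eventually_word_prob_sprefix_bounds[OF \<open>0 < \<eta>\<close>] unfolding eventually_sequentially by blast
  have "prob (occurs_before s (K j) (2 ^ (j + 1))) \<le> r ^ (j + 1)" if j: "J / c \<le> real j" for j
  proof -
    have "real J \<le> c * real j" using j c_pos by (simp add: field_simps)
    then have "J \<le> K j" using K_ge[of j] c_pos by (simp add: algebra_simps)
    have "0 < c * (real j + 1)" using c_pos by simp
    then have "1 \<le> K j" using K_ge[of j] by linarith
    then have "prob (occurs_before s (K j) (2 ^ (j + 1)))
        \<le> 2 ^ (j + 1) * word_prob p Q (rev (sprefix s (K j)))"
      using prob_occurs_before_le[of "K j" s "2 ^ (j + 1)"] by simp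
    also have "\<dots> \<le> 2 ^ (j + 1) * exp (- (real (K j) * (h - \<eta>)))"
      using J[OF \<open>J \<le> K j\<close>] by (intro mult_left_mono) simp_all
    also have "\<dots> \<le> r ^ (j + 1)"
      unfolding r_def using \<open>0 < h - \<eta>\<close> K_ge by (intro two_power_mult_exp_le) auto
    finally show ?thesis .
  qed
  moreover have "eventually (\<lambda>j. J / c \<le> real j) sequentially"
    by real_asymp
  ultimately have "eventually (\<lambda>j. norm (prob (occurs_before s (K j) (2 ^ (j + 1)))) \<le> r ^ (j + 1))
      sequentially"
    by (auto elim: eventually_mono)
  moreover have "summable (\<lambda>j. r ^ (j + 1))"
    using \<open>r < 1\<close> by (simp add: r_def summable_mult)
  ultimately show ?thesis
    by (rule summable_comparison_test_ev)
qed

lemma AE_eventually_Xn_le: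
  assumes c: "ln 2 / h < c"
  shows "AE \<omega> in M. eventually (\<lambda>n. real (Xn (\<lambda>i. U i \<omega>) n s) \<le> c * (ln n / ln 2 + 1)) sequentially"
proof -
  define K where "K = (\<lambda>j::nat. nat \<lceil>c * (real j + 1)\<rceil>)"
  define A where "A = (\<lambda>j::nat. occurs_before s (K j) (2 ^ (j + 1)))"
  have "0 < ln 2 / h" using h_pos by simp
  then have c_pos: "0 < c" using c by linarith
  have K_ge: "c * (real j + 1) \<le> real (K j)" for j
    unfolding K_def by linarith
  have K_lt: "real (K j) < c * (real j + 1) + 1" and K_pos: "1 \<le> K j" for j
  proof -
    have "0 < c * (real j + 1)" using c_pos by simp
    then show "real (K j) < c * (real j + 1) + 1" and "1 \<le> K j"
      using K_ge[of j] unfolding K_def by linarith+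
  qed
  have "AE \<omega> in M. eventually (\<lambda>j. \<omega> \<in> space M - A j) sequentially"
  proof (rule borel_cantelli_AE1)
    show "A j \<in> sets M" for j by (simp add: A_def sets_occurs_before)
    show "emeasure M (A j) < \<infinity>" for j by (simp add: less_top[symmetric])
    show "summable (\<lambda>j. prob (A j))"
      unfolding A_def by (rule summable_prob_occurs_before[OF c K_ge])
  qed
  then show ?thesis
  proof (rule AE_mp, intro AE_I2 impI)
    fix \<omega> assume "eventually (\<lambda>j. \<omega> \<in> space M - A j) sequentially"
    then obtain J where J: "\<And>j. J \<le> j \<Longrightarrow> \<omega> \<in> space M - A j"
      unfolding eventually_sequentially by blast
    show "eventually (\<lambda>n. real (Xn (\<lambda>i. U i \<omega>) n s) \<le> c * (ln n / ln 2 + 1)) sequentially"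
    proof (rule eventually_sequentiallyI[of "2 ^ J"])
      fix n :: nat assume "2 ^ J \<le> n"
      then obtain j where "J \<le> j" and j: "n < 2 ^ (j + 1)" "real j \<le> ln n / ln 2"
        by (rule dyadic_index)
      then have "Xn (\<lambda>i. U i \<omega>) n s < K j"
        using J Xn_less_of_notin_occurs_before[of \<omega> s "K j" "2 ^ (j + 1)" n] K_pos j(1)
        by (simp add: A_def)
      then have "real (Xn (\<lambda>i. U i \<omega>) n s) < c * (real j + 1)"
        using K_lt[of j] by linarith
      also have "c * (real j + 1) \<le> c * (ln n / ln 2 + 1)"
        using c_pos j(2) by simp
      finally show "real (Xn (\<lambda>i. U i \<omega>) n s) \<le> c * (ln n / ln 2 + 1)" by simp
    qed
  qed
qed

lemma AE_eventually_Xn_div_ln_le: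
  assumes "0 < e"
  shows "AE \<omega> in M. eventually (\<lambda>n. real (Xn (\<lambda>i. U i \<omega>) n s) / ln n \<le> 1 / h + e) sequentially"
proof -
  define c where "c = (1 / h + e / 2) * ln 2"
  have "ln 2 / h < c" using assms by (simp add: c_def field_simps)
  from AE_eventually_Xn_le[OF this] show ?thesis
  proof (rule AE_mp, intro AE_I2 impI)
    fix \<omega> assume "eventually (\<lambda>n. real (Xn (\<lambda>i. U i \<omega>) n s) \<le> c * (ln n / ln 2 + 1)) sequentially"
    moreover have "eventually (\<lambda>n::nat. c / ln n \<le> e / 2) sequentially"
      using assms by real_asymp
    moreover have "eventually (\<lambda>n::nat. 0 < ln n) sequentially"
      by real_asymp
    ultimately show "eventually (\<lambda>n. real (Xn (\<lambda>i. U i \<omega>) n s) / ln n \<le> 1 / h + e) sequentially"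
    proof eventually_elim
      case (elim n)
      then have "real (Xn (\<lambda>i. U i \<omega>) n s) / ln n \<le> c * (ln n / ln 2 + 1) / ln n"
        by (intro divide_right_mono) auto
      also have "\<dots> = c / ln 2 + c / ln n"
        using elim by (simp add: field_simps)
      also have "c / ln 2 = 1 / h + e / 2"
        by (simp add: c_def)
      finally show ?case using elim by linarith
    qed
  qed
qed

lemma eventually_word_prob_ge_powr:
  assumes "0 < \<epsilon>" and "\<epsilon> < 1"
  shows "eventually (\<lambda>n. real n powr - (1 - \<epsilon> / 2)
    \<le> word_prob p Q (rev (sprefix s (nat \<lfloor>(1 - \<epsilon>) * ln n / h\<rfloor>)))) sequentially"
proof -
  define \<eta> where "\<eta> = h * \<epsilon> / 2"
  have "0 < \<eta>" using assms h_pos by (simp add: \<eta>_def)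
  obtain J where J: "\<And>j. J \<le> j \<Longrightarrow> exp (- (real j * (h + \<eta>))) \<le> word_prob p Q (rev (sprefix s j))"
    using eventually_word_prob_sprefix_bounds[OF \<open>0 < \<eta>\<close>] unfolding eventually_sequentially by blast
  have "eventually (\<lambda>n::nat. real J \<le> (1 - \<epsilon>) * ln n / h) sequentially"
    using assms h_pos by real_asymp
  moreover have "eventually (\<lambda>n::nat. 0 < ln n) sequentially"
    by real_asymp
  ultimately show ?thesis
  proof eventually_elim
    case (elim n)
    define y where "y = (1 - \<epsilon>) * ln n / h"
    have "J \<le> nat \<lfloor>y\<rfloor>" and "real (nat \<lfloor>y\<rfloor>) \<le> y"
      using elim by (simp_all add: y_def le_nat_floor)
    have "real (nat \<lfloor>y\<rfloor>) * (h + \<eta>) \<le> y * (h + \<eta>)"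
      using \<open>real (nat \<lfloor>y\<rfloor>) \<le> y\<close> h_pos \<open>0 < \<eta>\<close> by (intro mult_right_mono) auto
    also have "\<dots> = (1 - \<epsilon>) * (1 + \<epsilon> / 2) * ln n"
      using h_pos by (simp add: y_def \<eta>_def field_simps)
    also have "\<dots> \<le> (1 - \<epsilon> / 2) * ln n"
      using elim(2) by (intro mult_right_mono) (auto simp: algebra_simps)
    finally have "exp (- ((1 - \<epsilon> / 2) * ln n)) \<le> exp (- (real (nat \<lfloor>y\<rfloor>) * (h + \<eta>)))"
      by simp
    moreover have "n \<noteq> 0" using elim(2) by (cases "n = 0") auto
    then have "real n powr - (1 - \<epsilon> / 2) = exp (- ((1 - \<epsilon> / 2) * ln n))"
      by (simp add: powr_def algebra_simps)
    ultimately have "real n powr - (1 - \<epsilon> / 2) \<le> exp (- (real (nat \<lfloor>y\<rfloor>) * (h + \<eta>)))"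
      by simp
    also have "\<dots> \<le> word_prob p Q (rev (sprefix s (nat \<lfloor>y\<rfloor>)))"
      by (rule J) fact
    finally show ?case by (simp add: y_def)
  qed
qed

lemma summable_prob_prefix_missed:
  assumes reach: "\<And>a b. 1 \<le> N a b \<and> N a b \<le> D \<and> \<delta> \<le> mpow Q (N a b) a b"
    and "0 < \<delta>" and "0 < \<epsilon>" and "\<epsilon> < 1"
  defines "K \<equiv> \<lambda>n::nat. nat \<lfloor>(1 - \<epsilon>) * ln n / h\<rfloor>"
  defines "L \<equiv> \<lambda>n. (n - 1) div K n" and "m \<equiv> \<lambda>n. (n - 1) div K n div (D + K n)"
  shows "summable (\<lambda>n. prob (prefix_missed s (K n) (L n) (D + K n) (m n)))"
proof -
  define lowm where "lowm = (\<lambda>x::real. ((x - 1) / (ln x / h) - 1) / (real D + ln x / h) - 1)"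
  have "eventually (\<lambda>n::nat. ln n / h * exp (- (\<delta> * real n powr - (1 - \<epsilon> / 2) * lowm n))
      \<le> 1 / real n ^ 2) sequentially"
    unfolding lowm_def using assms h_pos by real_asymp
  moreover have "eventually (\<lambda>n::nat. 0 \<le> lowm n) sequentially"
    unfolding lowm_def using h_pos by real_asymp
  moreover have "eventually (\<lambda>n::nat. 1 \<le> (1 - \<epsilon>) * ln n / h) sequentially"
    using assms h_pos by real_asymp
  moreover note eventually_word_prob_ge_powr[OF \<open>0 < \<epsilon>\<close> \<open>\<epsilon> < 1\<close>]
  ultimately have "eventually (\<lambda>n. norm (prob (prefix_missed s (K n) (L n) (D + K n) (m n)))
      \<le> 1 / real n ^ 2) sequentially"
  proof eventually_elim
    case (elim n)
    have "0 < (1 - \<epsilon>) * ln n / h" using elim(3) by linarith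
    then have "0 < ln n" using assms h_pos by (simp add: zero_less_divide_iff zero_less_mult_iff)
    have "1 \<le> K n" using elim(3) by (simp add: K_def le_nat_floor)
    have "real (K n) \<le> (1 - \<epsilon>) * ln n / h"
      unfolding K_def using elim(3) by (intro of_nat_floor) linarith
    also have "\<dots> \<le> ln n / h"
      using \<open>0 < ln n\<close> assms h_pos by (intro divide_right_mono mult_left_le_one_le) auto
    finally have "real (K n) \<le> ln n / h" .
    have "prob (prefix_missed s (K n) (L n) (D + K n) (m n))
        \<le> ln n / h * exp (- (\<delta> * real n powr - (1 - \<epsilon> / 2) * lowm n))"
      unfolding L_def m_def lowm_def
      using \<open>0 < \<delta>\<close> \<open>1 \<le> K n\<close> \<open>real (K n) \<le> ln n / h\<close> elim(2,4)
      by (intro prob_prefix_missed_by_time_le[OF reach]) (auto simp: K_def lowm_def)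
    also have "\<dots> \<le> 1 / real n ^ 2" by (rule elim(1))
    finally show ?case by simp
  qed
  moreover have "summable (\<lambda>n::nat. 1 / real n ^ 2)"
    using inverse_power_summable[of 2, where 'a = real] by (simp add: inverse_eq_divide)
  ultimately show ?thesis
    by (rule summable_comparison_test_ev)
qed

lemma AE_eventually_Xn_ge:
  assumes "0 < \<epsilon>" and "\<epsilon> < 1"
  shows "AE \<omega> in M. eventually (\<lambda>n. (1 - \<epsilon>) * ln n / h - 1 \<le> real (Xn (\<lambda>i. U i \<omega>) n s)) sequentially"
proof -
  obtain \<delta> N D where "0 < \<delta>" and reach: "\<And>a b. 1 \<le> N a b \<and> N a b \<le> D \<and> \<delta> \<le> mpow Q (N a b) a b"
    using irreducible_matrix_uniform_bound[OF irreducible] by metis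
  define K where "K = (\<lambda>n::nat. nat \<lfloor>(1 - \<epsilon>) * ln n / h\<rfloor>)"
  define L where "L = (\<lambda>n. (n - 1) div K n)"
  define E where "E = (\<lambda>n. prefix_missed s (K n) (L n) (D + K n) (L n div (D + K n)))"
  have "AE \<omega> in M. eventually (\<lambda>n. \<omega> \<in> space M - E n) sequentially"
  proof (rule borel_cantelli_AE1)
    show "E n \<in> sets M" for n by (simp add: E_def sets_prefix_missed)
    show "emeasure M (E n) < \<infinity>" for n by (simp add: less_top[symmetric])
    show "summable (\<lambda>n. prob (E n))"
      unfolding E_def L_def K_def by (rule summable_prob_prefix_missed[OF reach \<open>0 < \<delta>\<close> assms])
  qed
  then show ?thesis
  proof (rule AE_mp, intro AE_I2 impI)
    fix \<omega> assume "eventually (\<lambda>n. \<omega> \<in> space M - E n) sequentially"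
    then show "eventually (\<lambda>n. (1 - \<epsilon>) * ln n / h - 1 \<le> real (Xn (\<lambda>i. U i \<omega>) n s)) sequentially"
      using eventually_gt_at_top[of 0]
    proof eventually_elim
      case (elim n)
      have "L n div (D + K n) * (D + K n) \<le> L n"
        by (rule div_times_less_eq_dividend)
      moreover have "1 + K n * L n \<le> n"
        using elim(2) times_div_less_eq_dividend[of "K n" "n - 1"] unfolding L_def by linarith
      ultimately have "K n \<le> Xn (\<lambda>i. U i \<omega>) n s"
        using elim(1) by (intro Xn_ge_of_notin_prefix_missed) (auto simp: E_def)
      moreover have "y - 1 \<le> real (nat \<lfloor>y\<rfloor>)" for y :: real
        using real_of_int_floor_gt_diff_one[of y] by (cases "0 \<le> \<lfloor>y\<rfloor>") auto
      then have "(1 - \<epsilon>) * ln n / h - 1 \<le> real (K n)"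
        unfolding K_def .
      ultimately show ?case by linarith
    qed
  qed
qed

lemma AE_eventually_Xn_div_ln_ge:
  assumes "0 < e"
  shows "AE \<omega> in M. eventually (\<lambda>n. 1 / h - e \<le> real (Xn (\<lambda>i. U i \<omega>) n s) / ln n) sequentially"
proof -
  define \<epsilon> where "\<epsilon> = min (h * e / 2) (1 / 2)"
  have \<epsilon>: "0 < \<epsilon>" "\<epsilon> < 1" "\<epsilon> / h \<le> e / 2"
    using assms h_pos by (auto simp: \<epsilon>_def field_simps)
  from AE_eventually_Xn_ge[OF \<epsilon>(1,2)] show ?thesis
  proof (rule AE_mp, intro AE_I2 impI)
    fix \<omega> assume "eventually (\<lambda>n. (1 - \<epsilon>) * ln n / h - 1 \<le> real (Xn (\<lambda>i. U i \<omega>) n s)) sequentially"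
    moreover have "eventually (\<lambda>n::nat. 1 / ln n \<le> e / 2) sequentially"
      using assms by real_asymp
    moreover have "eventually (\<lambda>n::nat. 0 < ln n) sequentially"
      by real_asymp
    ultimately show "eventually (\<lambda>n. 1 / h - e \<le> real (Xn (\<lambda>i. U i \<omega>) n s) / ln n) sequentially"
    proof eventually_elim
      case (elim n)
      have "1 / h - e \<le> (1 - \<epsilon>) / h - 1 / ln n"
        using elim(2) \<epsilon>(3) by (simp add: diff_divide_distrib)
      also have "\<dots> = ((1 - \<epsilon>) * ln n / h - 1) / ln n"
        using elim(3) by (simp add: field_simps)
      also have "\<dots> \<le> real (Xn (\<lambda>i. U i \<omega>) n s) / ln n"
        using elim(1,3) by (intro divide_right_mono) auto
      finally show ?case .
    qed
  qed
qed

end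

theorem lemma1:
  fixes M :: "'w measure" and U :: "nat \<Rightarrow> 'w \<Rightarrow> nucl"
    and p :: "nucl \<Rightarrow> real" and Q :: "nucl \<Rightarrow> nucl \<Rightarrow> real"
    and s :: "nat \<Rightarrow> nucl" and h :: real
  assumes "prob_space M"
    and "stochastic_matrix Q" and "irreducible_matrix Q" and "aperiodic_matrix Q"
    and "invariant_measure Q p"
    and "markov_chain_from M U p Q"
    and "(\<lambda>n. (1 / real n) * ln (1 / pword M U s n)) \<longlonglongrightarrow> h"
    and "h > 0"
  shows "AE \<omega> in M. (\<lambda>n. real (Xn (\<lambda>i. U i \<omega>) n s) / ln (real n)) \<longlonglongrightarrow> 1 / h"
proof -
  interpret cgr_branch p Q M U s h
    using assms by (simp add: cgr_branch_def cgr_branch_axioms_def stationary_process_def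
        stationary_process_axioms_def stationary_chain_def)
  show ?thesis
    by (rule AE_tendsto_of_eventually_bounds)
        (fact AE_eventually_Xn_div_ln_le AE_eventually_Xn_div_ln_ge)+
qed

end
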